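(* Let $\mu_1,\mu_2:\mathbb C[x]\to\mathbb C$ be linear functionals with $\mu_i(1)=1$, and let $\mu:=\mu_1\boxplus\mu_2$ be their free convolution. Let $\tau_1,\tau_2,\tau$ be the inverse Markov–Krein transforms of $\mu_1,\mu_2,\mu$, respectively. Then $$(\mu_1,\mu_1-\tau_1)\boxplus(\mu_2,\mu_2-\tau_2)=(\mu,\mu-\tau),$$ where the left-hand side is the infinitesimal free convolution.
   Context: With $G_\nu(z)=\sum_{n\ge0}\nu(x^n)z^{-n-1}$ as a formal series, the inverse Markov–Krein transform of a linear functional $\nu$ on $\mathbb C[x]$ with $\nu(1)=1$ is the linear functional $\tau$ on $\mathbb C[x]$ determined by $\frac{d}{dz}G_\nu(z)=-G_\tau(z)G_\nu(z)$ (so $\tau(1)=1$). The free convolution $\mu_1\boxplus\mu_2$ is the distribution ($x^n\mapsto\varphi((b_1+b_2)^n)$) of $b_1+b_2$ for free elements $b_1,b_2$ with distributions $\mu_1,\mu_2$ in a ncps. An infinitesimal ncps is $(\mathcal C,\varphi,\varphi')$ with $\mathcal C$ unital, $\varphi(1)=1$, $\varphi'(1)=0$; unital subalgebras $(\mathcal C_i)$ are infinitesimally free if for $i_1\ne\cdots\ne i_n$ and $c_l\in\mathcal C_{i_l}$ with $\varphi(c_l)=0$: $\varphi(c_1\cdots c_n)=0$ and $\varphi'(c_1\cdots c_n)=\varphi(c_1c_n)\varphi(c_2c_{n-1})\cdots\varphi'(c_{(n+1)/2})$ if $n$ odd and $i_1=i_n,i_2=i_{n-1},\dots$, else $0$.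 An infinitesimal distribution is a pair $(\nu,\nu')$ of linear functionals on $\mathbb C[x]$ with $\nu(1)=1$, $\nu'(1)=0$; that of $b$ is $(x^n\mapsto\varphi(b^n),x^n\mapsto\varphi'(b^n))$. The infinitesimal free convolution $(\nu_1,\nu_1')\boxplus(\nu_2,\nu_2')$ is the infinitesimal distribution of $b_1+b_2$ where $b_1,b_2$ generate infinitesimally free unital subalgebras and have infinitesimal distributions $(\nu_i,\nu_i')$ (well defined). *)

theory Defs
  imports Complex_Main
begin

text \<open>Linear functionals nu on C[x] are represented by their moment sequences
  n \<mapsto> nu(x^n), of type nat \<Rightarrow> complex.\<close>

text \<open>A unital complex algebra is a ring_1 type 'a together with a unital ring
  homomorphism sc from the complex numbers into the centre of 'a (the scalars).\<close>

definition complex_alg :: "(complex \<Rightarrow> 'a::ring_1) \<Rightarrow> bool" where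
  "complex_alg sc \<longleftrightarrow>
     sc 1 = 1 \<and> (\<forall>a b. sc (a + b) = sc a + sc b) \<and> (\<forall>a b. sc (a * b) = sc a * sc b)
     \<and> (\<forall>a x. sc a * x = x * sc a)"

definition C_linear :: "(complex \<Rightarrow> 'a::ring_1) \<Rightarrow> ('a \<Rightarrow> complex) \<Rightarrow> bool" where
  "C_linear sc f \<longleftrightarrow> (\<forall>x y. f (x + y) = f x + f y) \<and> (\<forall>a x. f (sc a * x) = a * f x)"

definition inf_ncps :: "(complex \<Rightarrow> 'a::ring_1) \<Rightarrow> ('a \<Rightarrow> complex) \<Rightarrow> ('a \<Rightarrow> complex) \<Rightarrow> bool" where
  "inf_ncps sc \<phi> \<phi>' \<longleftrightarrow> complex_alg sc \<and> C_linear sc \<phi> \<and> C_linear sc \<phi>' \<and> \<phi> 1 = 1 \<and> \<phi>' 1 = 0"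

definition alg_gen :: "(complex \<Rightarrow> 'a::ring_1) \<Rightarrow> 'a \<Rightarrow> 'a set" where
  "alg_gen sc b = {(\<Sum>k<N. sc (c k) * b ^ k) | c N. True}"

definition inf_free :: "(complex \<Rightarrow> 'a::ring_1) \<Rightarrow> ('a \<Rightarrow> complex) \<Rightarrow> ('a \<Rightarrow> complex)
    \<Rightarrow> 'i set \<Rightarrow> ('i \<Rightarrow> 'a set) \<Rightarrow> bool" where
  "inf_free sc \<phi> \<phi>' I A \<longleftrightarrow>
     (\<forall>n \<ge> 1. \<forall>(\<iota>::nat \<Rightarrow> 'i) (c::nat \<Rightarrow> 'a).
        (\<forall>l<n. \<iota> l \<in> I \<and> c l \<in> A (\<iota> l) \<and> \<phi> (c l) = 0) \<and>
        (\<forall>l. Suc l < n \<longrightarrow> \<iota> l \<noteq> \<iota> (Suc l)) \<longrightarrow>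
          \<phi> (prod_list (map c [0..<n])) = 0 \<and>
          \<phi>' (prod_list (map c [0..<n])) =
            (if odd n \<and> (\<forall>l<n. \<iota> l = \<iota> (n - 1 - l))
             then (\<Prod>l<n div 2. \<phi> (c l * c (n - 1 - l))) * \<phi>' (c (n div 2))
             else 0))"

definition distr :: "('a::ring_1 \<Rightarrow> complex) \<Rightarrow> 'a \<Rightarrow> nat \<Rightarrow> complex" where
  "distr f b = (\<lambda>n. f (b ^ n))"

text \<open>tau is the inverse Markov-Krein transform of nu: comparing coefficients of
  z^(-n-2) in  d/dz G_nu = - G_tau G_nu  gives (n+1) nu_n = sum_{j+k=n} tau_j nu_k.\<close>
definition is_inv_MK :: "(nat \<Rightarrow> complex) \<Rightarrow> (nat \<Rightarrow> complex) \<Rightarrow> bool" where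
  "is_inv_MK \<nu> \<tau> \<longleftrightarrow> (\<forall>n. of_nat (n + 1) * \<nu> n = (\<Sum>j\<le>n. \<tau> j * \<nu> (n - j)))"

end

theory Submission
  imports Defs "HOL-Computational_Algebra.Formal_Power_Series"
begin

text \<open>
  Power series are in \<open>X\<close>, which stands for \<open>1/z\<close>. For an element \<open>b\<close> with moment series \<open>N\<close>
  let \<open>u\<close> be the compositional inverse of \<open>X N\<close> and \<open>x = N \<circ> u\<close>. The resolvent
  \<open>Q = (1 - u b)\<^sup>-\<^sup>1\<close> has \<open>\<phi>(Q) = x\<close>, so \<open>(x - X b)\<^sup>-\<^sup>1 = Q / x = 1 + A\<close> with \<open>A\<close> a series of
  centred elements of the algebra generated by \<open>b\<close>; the inverse Markov--Krein relation for \<open>b\<close>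
  amounts to \<open>\<phi>'(A) = - \<phi>(A\<^sup>2)\<close>.

  For \<open>b\<^sub>1 + b\<^sub>2\<close> put \<open>p = x + y - 1\<close> and \<open>u = X / p\<close>. As \<open>x - X b\<^sub>1 = (1 + A)\<^sup>-\<^sup>1\<close> and
  \<open>y - X b\<^sub>2 = (1 + B)\<^sup>-\<^sup>1\<close>, we get \<open>p - X (b\<^sub>1 + b\<^sub>2) = (1 + A)\<^sup>-\<^sup>1 (1 - A B) (1 + B)\<^sup>-\<^sup>1\<close>, hence
  \<open>(1 - u (b\<^sub>1 + b\<^sub>2))\<^sup>-\<^sup>1 = p (1 + B) (1 - A B)\<^sup>-\<^sup>1 (1 + A)\<close>. The last three factors expand into
  alternating words in centred elements. Freeness makes their \<open>\<phi>\<close>-value \<open>1\<close>, so \<open>p\<close> plays the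
  role of \<open>x\<close> for \<open>b\<^sub>1 + b\<^sub>2\<close>; infinitesimal freeness, under which only odd palindromic words
  contribute, expresses their \<open>\<phi>'\<close>-value through \<open>\<phi>(A\<^sup>2)\<close>, \<open>\<phi>(B\<^sup>2)\<close>, \<open>\<phi>'(A)\<close>, \<open>\<phi>'(B)\<close>. Composed
  with \<open>u\<close>, the inverse Markov--Krein relation becomes the identity \<open>(p - X p') (1 - s) = 1\<close>,
  where \<open>p s\<close> is the \<open>\<phi>'\<close>-series, and this follows from the same identities for \<open>b\<^sub>1\<close>, \<open>b\<^sub>2\<close>.
\<close>

unbundle fps_syntax

lemma triangle_sum_swap:
  fixes g :: "nat \<Rightarrow> nat \<Rightarrow> nat \<Rightarrow> 'b::comm_monoid_add"
  shows "(\<Sum>m=0..n. \<Sum>i=0..m. g i (m-i) (n-m)) = (\<Sum>m=0..n. \<Sum>i=0..m. g i (n-m) (m-i))"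
proof -
  let ?D = "{(i,j). i + j \<le> n}"
  have "(\<Sum>m=0..n. \<Sum>i=0..m. g i (m-i) (n-m)) = (\<Sum>(i,j)\<in>?D. g i j (n-i-j))"
    unfolding sum.triangle_reindex_eq atLeast0AtMost
    by (intro sum.cong refl) (auto intro!: arg_cong[where f="g _ _"])
  also have "\<dots> = (\<Sum>(i,j)\<in>?D. g i (n-i-j) j)"
    by (rule sum.reindex_bij_witness[where i="\<lambda>(i,j). (i, n-i-j)" and j="\<lambda>(i,j). (i, n-i-j)"]) auto
  also have "\<dots> = (\<Sum>m=0..n. \<Sum>i=0..m. g i (n-m) (m-i))"
    unfolding sum.triangle_reindex_eq atLeast0AtMost
    by (intro sum.cong refl) (auto intro!: arg_cong[where f="\<lambda>x. g _ x _"])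
  finally show ?thesis .
qed

lemma fps_mult3_nth:
  fixes F G H :: "'a::ring_1 fps"
  shows "(F * G * H) $ n = (\<Sum>m=0..n. \<Sum>j=0..m. F $ j * G $ (m - j) * H $ (n - m))"
  by (simp only: fps_mult_nth sum_distrib_right)

lemma fps_deriv_X_mult_nth: "fps_deriv (fps_X * f) $ n = of_nat (n + 1) * f $ n"
  by (simp only: fps_deriv_nth fps_X_mult_nth) simp

lemma is_inv_MK_iff_fps:
  "is_inv_MK \<nu> \<tau> \<longleftrightarrow> fps_deriv (fps_X * Abs_fps \<nu>) = Abs_fps \<tau> * Abs_fps \<nu>"
  by (simp only: is_inv_MK_def fps_eq_iff fps_deriv_X_mult_nth fps_mult_nth atLeast0AtMost fps_nth_Abs_fps)

lemma fps_inv_X_mult_subordination: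
  fixes N :: "complex fps"
  assumes "N $ 0 = 1"
  defines "u \<equiv> fps_inv (fps_X * N)"
  shows "u $ 0 = 0" and "u * (N oo u) = fps_X"
proof -
  show u0: "u $ 0 = 0"
    by (simp add: u_def fps_inv_def)
  have "(fps_X * N) oo u = fps_X"
    unfolding u_def by (rule fps_inv_right) (simp_all add: assms)
  then show "u * (N oo u) = fps_X"
    by (simp add: fps_compose_mult_distrib[OF u0] fps_X_fps_compose_startby0[OF u0])
qed

lemma fps_deriv_compose_subordination:
  fixes N u p :: "complex fps"
  assumes u0: "u $ 0 = 0" and up: "u * p = fps_X" and Nu: "N oo u = p"
  shows "(fps_deriv (fps_X * N) oo u) * (p - fps_X * fps_deriv p) = p * p"
proof -
  have "(fps_X * N) oo u = fps_X"
    using up Nu by (simp add: fps_compose_mult_distrib[OF u0] fps_X_fps_compose_startby0[OF u0])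
  then have chain: "(fps_deriv (fps_X * N) oo u) * fps_deriv u = 1"
    using fps_compose_deriv[OF u0, of "fps_X * N"] by simp
  have "u * fps_deriv p + fps_deriv u * p = 1"
    using arg_cong[OF up, of fps_deriv] by simp
  then have "p - fps_X * fps_deriv p = p * (u * fps_deriv p + fps_deriv u * p) - u * p * fps_deriv p"
    by (simp add: up)
  also have "\<dots> = fps_deriv u * p * p"
    by (simp add: algebra_simps)
  finally have "p - fps_X * fps_deriv p = fps_deriv u * p * p" .
  then show ?thesis
    using chain by (simp add: mult.assoc[symmetric])
qed

lemma inv_MK_iff_subordination:
  fixes N D T u p s :: "complex fps"
  assumes MK: "fps_deriv (fps_X * N) = T * N" and "N \<noteq> 0"
    and u0: "u $ 0 = 0" and up: "u * p = fps_X" and Nu: "N oo u = p" and Du: "D oo u = p * s"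
  shows "D = N - T \<longleftrightarrow> (p - fps_X * fps_deriv p) * (1 - s) = 1"
proof -
  have "u $ 1 * p $ 0 = 1"
    using arg_cong[OF up, of "\<lambda>f. f $ 1"] u0 by (simp add: fps_mult_nth)
  then have u1: "u $ 1 \<noteq> 0" and p0: "p $ 0 \<noteq> 0"
    by auto
  define h where "h = p - fps_X * fps_deriv p"
  have "h \<noteq> 0" "p * p \<noteq> 0"
    using p0 by (auto simp: h_def fps_eq_iff[of _ 0] intro!: exI[of _ 0])
  have "D = N - T \<longleftrightarrow> (N - T - D) * N = 0"
    using \<open>N \<noteq> 0\<close> by auto
  also have "\<dots> \<longleftrightarrow> fps_deriv (fps_X * N) = N * N - D * N"
    unfolding MK by (auto simp: algebra_simps)
  also have "\<dots> \<longleftrightarrow> fps_deriv (fps_X * N) oo u = (N * N - D * N) oo u"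
    using fps_compose_inj_right[OF u0 u1] by simp
  also have "(N * N - D * N) oo u = p * p * (1 - s)"
    by (simp add: fps_compose_sub_distrib fps_compose_mult_distrib[OF u0] Nu Du algebra_simps)
  also have "fps_deriv (fps_X * N) oo u = p * p * (1 - s) \<longleftrightarrow>
      (fps_deriv (fps_X * N) oo u) * h = p * p * (1 - s) * h"
    using \<open>h \<noteq> 0\<close> by simp
  also have "\<dots> \<longleftrightarrow> p * p = p * p * (1 - s) * h"
    using fps_deriv_compose_subordination[OF u0 up Nu] by (simp add: h_def)
  also have "\<dots> \<longleftrightarrow> p * p * 1 = p * p * ((1 - s) * h)"
    by (simp only: mult_1_right mult.assoc)
  also have "\<dots> \<longleftrightarrow> 1 = (1 - s) * h"
    using \<open>p * p \<noteq> 0\<close> by (rule mult_left_cancel)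
  finally show ?thesis
    by (auto simp: h_def mult.commute)
qed

lemma inverse_of_sum_of_inverses:
  fixes \<alpha> \<beta> A B S :: "'b::ring_1"
  assumes \<alpha>: "\<alpha> * (1 + A) = 1" "(1 + A) * \<alpha> = 1" and \<beta>: "\<beta> * (1 + B) = 1" "(1 + B) * \<beta> = 1"
    and S: "(1 - A * B) * S = 1"
  shows "(\<alpha> + \<beta> - 1) * ((1 + B) * S * (1 + A)) = 1"
proof -
  have "\<alpha> * A = 1 - \<alpha>" "B * \<beta> = 1 - \<beta>"
    using \<alpha>(1) \<beta>(2) by (simp_all add: ring_distribs eq_diff_eq add.commute)
  then have sum: "\<alpha> + \<beta> - 1 = \<alpha> * (1 - A * B) * \<beta>"
    by (simp add: ring_distribs mult.assoc[symmetric]) (simp add: mult.assoc ring_distribs)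
  have "(\<alpha> + \<beta> - 1) * ((1 + B) * S * (1 + A)) = \<alpha> * (1 - A * B) * (\<beta> * (1 + B)) * S * (1 + A)"
    unfolding sum by (simp only: mult.assoc)
  also have "\<dots> = \<alpha> * ((1 - A * B) * S) * (1 + A)"
    by (simp only: \<beta>(1) mult_1_right mult.assoc)
  finally show ?thesis
    using S \<alpha>(1) by simp
qed

lemma add_inverses_minus_one_inverse:
  fixes a b s h1 h2 :: "'a::idom"
  assumes "(1 - a * b) * (1 - s) = (1 + a) * (1 + b)" "1 - a * b \<noteq> 0"
    and "(1 + a) * h1 = 1" "(1 + b) * h2 = 1"
  shows "(h1 + h2 - 1) * (1 - s) = 1"
proof -
  have "(h1 + h2 - 1) * ((1 + a) * (1 + b)) = (1 + a) * h1 * (1 + b) + (1 + b) * h2 * (1 + a) - (1 + a) * (1 + b)"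
    by (simp add: algebra_simps)
  also have "\<dots> = 1 - a * b"
    using assms(3,4) by (simp add: algebra_simps)
  finally have "(1 - a * b) * ((h1 + h2 - 1) * (1 - s)) = (1 - a * b) * 1"
    using assms(1) by (simp add: algebra_simps)
  then show ?thesis
    using assms(2) by simp
qed

section \<open>Power series over a complex algebra\<close>

lemma additive_if_C_linear: "C_linear sc f \<Longrightarrow> additive f"
  by unfold_locales (simp add: C_linear_def)

lemma C_linear_scale: "C_linear sc f \<Longrightarrow> f (sc a * x) = a * f x"
  by (simp add: C_linear_def)

definition fps_embed :: "(complex \<Rightarrow> 'a::ring_1) \<Rightarrow> complex fps \<Rightarrow> 'a fps" where
  "fps_embed sc f = Abs_fps (\<lambda>n. sc (f $ n))"

definition fps_apply :: "('a::ring_1 \<Rightarrow> complex) \<Rightarrow> 'a fps \<Rightarrow> complex fps" where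
  "fps_apply g F = Abs_fps (\<lambda>n. g (F $ n))"

text \<open>\<open>fps_compose_elem sc f u z\<close> is the series \<open>f(u z)\<close> for an element \<open>z\<close> of the algebra.\<close>
definition fps_compose_elem ::
    "(complex \<Rightarrow> 'a::ring_1) \<Rightarrow> complex fps \<Rightarrow> complex fps \<Rightarrow> 'a \<Rightarrow> 'a fps" where
  "fps_compose_elem sc f u z = Abs_fps (\<lambda>n. \<Sum>i=0..n. sc (f $ i * (u ^ i) $ n) * z ^ i)"

definition fps_geometric :: "complex fps" where
  "fps_geometric = Abs_fps (\<lambda>_. 1)"

abbreviation resolvent :: "(complex \<Rightarrow> 'a::ring_1) \<Rightarrow> complex fps \<Rightarrow> 'a \<Rightarrow> 'a fps" where
  "resolvent sc u z \<equiv> fps_compose_elem sc fps_geometric u z"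

lemma fps_embed_nth [simp]: "fps_embed sc f $ n = sc (f $ n)"
  by (simp add: fps_embed_def)

lemma fps_apply_nth [simp]: "fps_apply g F $ n = g (F $ n)"
  by (simp add: fps_apply_def)

lemma fps_geometric_shift: "fps_geometric - fps_X * fps_geometric = 1"
  by (simp add: fps_eq_iff fps_geometric_def)

lemma fps_deriv_geometric_shift:
  "fps_deriv fps_geometric - fps_X * fps_deriv fps_geometric = fps_geometric"
  by (simp add: fps_eq_iff fps_geometric_def)

locale complex_algebra =
  fixes sc :: "complex \<Rightarrow> 'a::ring_1"
  assumes complex_alg: "complex_alg sc"
begin

sublocale sc: additive sc
  using complex_alg unfolding complex_alg_def by unfold_locales blast

lemma sc_1 [simp]: "sc 1 = 1"
  using complex_alg unfolding complex_alg_def by blast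

lemma sc_mult: "sc (a * b) = sc a * sc b"
  using complex_alg unfolding complex_alg_def by blast

lemma sc_commute: "sc a * x = x * sc a"
  using complex_alg unfolding complex_alg_def by blast

lemma sc_power_mult: "sc c * z ^ k * (sc d * z ^ m) = sc (c * d) * z ^ (k + m)"
proof -
  have "sc c * z ^ k * (sc d * z ^ m) = sc c * (sc d * z ^ k) * z ^ m"
    by (simp only: mult.assoc sc_commute[of d "z ^ k"])
  then show ?thesis
    by (simp only: mult.assoc sc_mult power_add)
qed

declare sc.zero [simp]

lemma alg_gen_intro: "(\<Sum>k<N. sc (c k) * z ^ k) \<in> alg_gen sc z"
  unfolding alg_gen_def by blast

lemma alg_gen_add:
  assumes "x \<in> alg_gen sc z" "y \<in> alg_gen sc z"
  shows "x + y \<in> alg_gen sc z"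
proof -
  from assms obtain c N d M where x: "x = (\<Sum>k<N. sc (c k) * z ^ k)" and y: "y = (\<Sum>k<M. sc (d k) * z ^ k)"
    by (auto simp: alg_gen_def)
  let ?c = "\<lambda>k. if k < N then c k else 0" and ?d = "\<lambda>k. if k < M then d k else 0"
  have "x = (\<Sum>k<N+M. sc (?c k) * z ^ k)"
    unfolding x by (rule sum.mono_neutral_cong_left) auto
  moreover have "y = (\<Sum>k<N+M. sc (?d k) * z ^ k)"
    unfolding y by (rule sum.mono_neutral_cong_left) auto
  ultimately have "x + y = (\<Sum>k<N+M. sc (?c k + ?d k) * z ^ k)"
    by (simp add: sum.distrib[symmetric] sc.add ring_distribs)
  then show ?thesis
    by (simp add: alg_gen_intro)
qed

lemma alg_gen_scale: "x \<in> alg_gen sc z \<Longrightarrow> sc a * x \<in> alg_gen sc z"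
proof -
  assume "x \<in> alg_gen sc z"
  then obtain c N where "x = (\<Sum>k<N. sc (c k) * z ^ k)"
    by (auto simp: alg_gen_def)
  then have "sc a * x = (\<Sum>k<N. sc (a * c k) * z ^ k)"
    by (simp add: sum_distrib_left sc_mult mult.assoc)
  then show ?thesis
    by (simp add: alg_gen_intro)
qed

lemma alg_gen_monomial: "sc a * z ^ k \<in> alg_gen sc z"
proof -
  have "(\<Sum>j<Suc k. sc (if j = k then a else 0) * z ^ j) = (\<Sum>j<Suc k. if j = k then sc a * z ^ k else 0)"
    by (intro sum.cong) auto
  then show ?thesis
    using alg_gen_intro[where N="Suc k" and c="\<lambda>j. if j = k then a else 0"] by simp
qed

lemma alg_gen_sum: "(\<And>k. k \<in> K \<Longrightarrow> f k \<in> alg_gen sc z) \<Longrightarrow> sum f K \<in> alg_gen sc z"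
  using alg_gen_monomial[of 0 z 0]
  by (induction K rule: infinite_finite_induct) (auto intro: alg_gen_add)

lemma alg_gen_diff:
  assumes "x \<in> alg_gen sc z" "y \<in> alg_gen sc z"
  shows "x - y \<in> alg_gen sc z"
proof -
  have "x + sc (- 1) * y \<in> alg_gen sc z"
    using assms by (intro alg_gen_add alg_gen_scale)
  then show ?thesis
    by (simp add: sc.minus)
qed

lemma fps_embed_add: "fps_embed sc (f + g) = fps_embed sc f + fps_embed sc g"
  by (simp add: fps_eq_iff sc.add)

lemma fps_embed_diff: "fps_embed sc (f - g) = fps_embed sc f - fps_embed sc g"
  by (simp add: fps_eq_iff sc.diff)

lemma fps_embed_1 [simp]: "fps_embed sc 1 = 1"
  by (simp add: fps_eq_iff)

lemma fps_embed_X [simp]: "fps_embed sc fps_X = fps_X"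
  by (simp add: fps_eq_iff fps_X_def)

lemma fps_embed_mult: "fps_embed sc (f * g) = fps_embed sc f * fps_embed sc g"
  by (simp add: fps_eq_iff fps_mult_nth sc.sum sc_mult)

lemma fps_embed_commute: "fps_embed sc f * G = G * fps_embed sc f"
proof (rule fps_ext)
  fix n
  have "(fps_embed sc f * G) $ n = (\<Sum>i=0..n. G $ (n - i) * sc (f $ i))"
    by (simp add: fps_mult_nth sc_commute)
  also have "\<dots> = (\<Sum>i=0..n. G $ (n - (n + 0 - i)) * sc (f $ (n + 0 - i)))"
    by (rule sum.atLeastAtMost_rev)
  also have "\<dots> = (G * fps_embed sc f) $ n"
    by (simp add: fps_mult_nth)
  finally show "(fps_embed sc f * G) $ n = (G * fps_embed sc f) $ n" .
qed

lemma fps_apply_add: "C_linear sc g \<Longrightarrow> fps_apply g (F + G) = fps_apply g F + fps_apply g G"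
  by (simp add: fps_eq_iff additive.add[OF additive_if_C_linear])

lemma fps_apply_diff: "C_linear sc g \<Longrightarrow> fps_apply g (F - G) = fps_apply g F - fps_apply g G"
  by (simp add: fps_eq_iff additive.diff[OF additive_if_C_linear])

lemma fps_apply_1: "C_linear sc g \<Longrightarrow> fps_apply g 1 = fps_const (g 1)"
  by (simp add: fps_eq_iff additive.zero[OF additive_if_C_linear])

lemma fps_apply_embed_mult:
  "C_linear sc g \<Longrightarrow> fps_apply g (fps_embed sc f * F) = f * fps_apply g F"
  by (simp add: fps_eq_iff fps_mult_nth additive.sum[OF additive_if_C_linear] C_linear_scale)

lemma fps_compose_elem_alg_gen: "fps_compose_elem sc f u z $ n \<in> alg_gen sc z"
  unfolding fps_compose_elem_def by (auto intro: alg_gen_sum alg_gen_monomial)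

lemma fps_apply_compose_elem:
  assumes "C_linear sc g"
  shows "fps_apply g (fps_compose_elem sc f u z) = Abs_fps (\<lambda>i. f $ i * g (z ^ i)) oo u"
  by (simp add: fps_eq_iff fps_compose_elem_def fps_compose_nth mult_ac
      additive.sum[OF additive_if_C_linear[OF assms]] C_linear_scale[OF assms])

context
  fixes u :: "complex fps"
  assumes u0: "u $ 0 = 0"
begin

lemma fps_compose_elem_nth:
  "n \<le> N \<Longrightarrow> fps_compose_elem sc f u z $ n = (\<Sum>i=0..N. sc (f $ i * (u ^ i) $ n) * z ^ i)"
  unfolding fps_compose_elem_def
  by (auto intro!: sum.mono_neutral_left simp: startsby_zero_power_prefix[OF u0])

lemma fps_compose_elem_diff:
  "fps_compose_elem sc (f - g) u z = fps_compose_elem sc f u z - fps_compose_elem sc g u z"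
  by (simp add: fps_compose_elem_def fps_eq_iff ring_distribs sc.diff sum_subtractf)

lemma fps_compose_elem_1: "fps_compose_elem sc 1 u z = 1"
proof (rule fps_ext)
  fix n
  have "fps_compose_elem sc 1 u z $ n = (\<Sum>i=0..n. if i = 0 then sc ((1::complex fps) $ n) else 0)"
    unfolding fps_compose_elem_def fps_nth_Abs_fps by (intro sum.cong) auto
  then show "fps_compose_elem sc 1 u z $ n = (1 :: 'a fps) $ n"
    by simp
qed

lemma fps_compose_elem_mult_X:
  "fps_compose_elem sc f u z * (fps_embed sc u * fps_const z) = fps_compose_elem sc (fps_X * f) u z"
proof (rule fps_ext)
  fix n
  have "(fps_compose_elem sc f u z * (fps_embed sc u * fps_const z)) $ n =
      (\<Sum>k=0..n. (\<Sum>i=0..n. sc (f $ i * (u ^ i) $ k) * z ^ i) * (sc (u $ (n - k)) * z ^ 1))"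
    by (simp add: fps_mult_nth[of "fps_compose_elem sc f u z"] fps_compose_elem_nth)
  also have "\<dots> = (\<Sum>k=0..n. \<Sum>i=0..n. sc (f $ i * ((u ^ i) $ k * u $ (n - k))) * z ^ Suc i)"
  proof -
    have "sc (f $ i * (u ^ i) $ k) * z ^ i * (sc (u $ (n - k)) * z ^ 1) =
        sc (f $ i * ((u ^ i) $ k * u $ (n - k))) * z ^ Suc i" for i k
      by (subst sc_power_mult) (simp add: mult.assoc)
    then show ?thesis
      by (simp only: sum_distrib_right)
  qed
  also have "\<dots> = (\<Sum>i=0..n. sc (f $ i * (u ^ i * u) $ n) * z ^ Suc i)"
    by (subst sum.swap) (simp add: fps_mult_nth sc.sum sum_distrib_left sum_distrib_right[symmetric])
  also have "\<dots> = (\<Sum>i=0..n. sc (f $ i * (u ^ Suc i) $ n) * z ^ Suc i)"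
    by (simp only: power_Suc2)
  also have "\<dots> = (\<Sum>i=0..Suc n. sc ((fps_X * f) $ i * (u ^ i) $ n) * z ^ i)"
    by (subst sum.atLeast0_atMost_Suc_shift) simp
  also have "\<dots> = fps_compose_elem sc (fps_X * f) u z $ n"
    by (rule fps_compose_elem_nth[symmetric]) simp
  finally show "(fps_compose_elem sc f u z * (fps_embed sc u * fps_const z)) $ n =
      fps_compose_elem sc (fps_X * f) u z $ n" .
qed

lemma resolvent_mult_right: "resolvent sc u z * (1 - fps_embed sc u * fps_const z) = 1"
  by (simp add: right_diff_distrib fps_compose_elem_mult_X fps_geometric_shift
      fps_compose_elem_1 flip: fps_compose_elem_diff)

lemma resolvent_unique:
  assumes "(1 - fps_embed sc u * fps_const z) * K = 1"
  shows "resolvent sc u z = K"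
proof -
  have "resolvent sc u z = resolvent sc u z * (1 - fps_embed sc u * fps_const z) * K"
    by (simp add: mult.assoc assms)
  then show ?thesis
    by (simp add: resolvent_mult_right)
qed

lemma resolvent_mult_left: "(1 - fps_embed sc u * fps_const z) * resolvent sc u z = 1"
proof -
  let ?M = "1 - fps_embed sc u * fps_const z"
  have "?M $ 0 * 1 = 1"
    using u0 by simp
  then have "?M * fps_right_inverse ?M 1 = 1"
    by (rule fps_right_inverse)
  then show ?thesis
    using resolvent_unique by simp
qed

lemma resolvent_square:
  "resolvent sc u z * resolvent sc u z = fps_compose_elem sc (fps_deriv fps_geometric) u z"
proof -
  let ?D = "fps_compose_elem sc (fps_deriv fps_geometric) u z"
  let ?M = "1 - fps_embed sc u * fps_const z"
  have "?D * ?M = resolvent sc u z"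
    by (simp add: right_diff_distrib fps_compose_elem_mult_X fps_deriv_geometric_shift
        flip: fps_compose_elem_diff)
  moreover have "?D = ?D * (?M * resolvent sc u z)"
    by (simp add: resolvent_mult_left)
  ultimately show ?thesis
    by (simp flip: mult.assoc)
qed

end

lemma fps_apply_resolvent:
  "C_linear sc g \<Longrightarrow> fps_apply g (resolvent sc u z) = Abs_fps (distr g z) oo u"
  by (simp add: fps_apply_compose_elem fps_geometric_def distr_def)

lemma fps_apply_resolvent_square:
  assumes "u $ 0 = 0" "C_linear sc g"
  shows "fps_apply g (resolvent sc u z * resolvent sc u z) = fps_deriv (fps_X * Abs_fps (distr g z)) oo u"
proof -
  have "Abs_fps (\<lambda>i. fps_deriv fps_geometric $ i * g (z ^ i)) = fps_deriv (fps_X * Abs_fps (distr g z))"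
    by (simp add: fps_eq_iff fps_deriv_X_mult_nth fps_geometric_def distr_def distrib_right)
  then show ?thesis
    by (simp add: resolvent_square assms fps_apply_compose_elem)
qed

lemma subordinated_resolvent_inverse:
  fixes u x :: "complex fps" and z :: 'a
  assumes u0: "u $ 0 = 0" and ux: "u * x = fps_X" and x0: "x $ 0 = 1"
  defines "R \<equiv> fps_embed sc (inverse x) * resolvent sc u z"
  shows "(fps_embed sc x - fps_X * fps_const z) * R = 1"
    and "R * (fps_embed sc x - fps_X * fps_const z) = 1"
proof -
  let ?M = "1 - fps_embed sc u * fps_const z"
  have x_inv: "fps_embed sc x * fps_embed sc (inverse x) = 1" "fps_embed sc (inverse x) * fps_embed sc x = 1"
    using x0 by (simp_all add: inverse_mult_eq_1 inverse_mult_eq_1' flip: fps_embed_mult)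
  have "fps_embed sc x * (fps_embed sc u * fps_const z) = fps_embed sc (x * u) * fps_const z"
    by (simp add: fps_embed_mult mult.assoc)
  also have "x * u = fps_X"
    using ux by (simp add: mult.commute)
  finally have "fps_embed sc x * (fps_embed sc u * fps_const z) = fps_X * fps_const z"
    by simp
  then have factor: "fps_embed sc x - fps_X * fps_const z = fps_embed sc x * ?M"
    by (simp add: right_diff_distrib)
  then have factor': "fps_embed sc x - fps_X * fps_const z = ?M * fps_embed sc x"
    by (simp add: fps_embed_commute[of x ?M])
  have "?M * fps_embed sc x * R = ?M * (fps_embed sc x * fps_embed sc (inverse x)) * resolvent sc u z"
    by (simp only: R_def mult.assoc)
  then show "(fps_embed sc x - fps_X * fps_const z) * R = 1"
    by (simp add: factor' x_inv(1) resolvent_mult_left[OF u0])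
  have "R * (fps_embed sc x * ?M) =
      fps_embed sc (inverse x) * (resolvent sc u z * fps_embed sc x) * ?M"
    by (simp only: R_def mult.assoc)
  also have "\<dots> = fps_embed sc (inverse x) * (fps_embed sc x * resolvent sc u z) * ?M"
    by (simp only: fps_embed_commute[of x "resolvent sc u z"])
  also have "\<dots> = fps_embed sc (inverse x) * fps_embed sc x * (resolvent sc u z * ?M)"
    by (simp only: mult.assoc)
  finally show "R * (fps_embed sc x - fps_X * fps_const z) = 1"
    by (simp add: factor x_inv(2) resolvent_mult_right[OF u0])
qed


lemma resolvent_add:
  fixes x y :: "complex fps" and A B S :: "'a fps"
  assumes u0: "u $ 0 = 0" and up: "u * (x + y - 1) = fps_X"
    and \<alpha>: "(fps_embed sc x - fps_X * fps_const z1) * (1 + A) = 1"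
      "(1 + A) * (fps_embed sc x - fps_X * fps_const z1) = 1"
    and \<beta>: "(fps_embed sc y - fps_X * fps_const z2) * (1 + B) = 1"
      "(1 + B) * (fps_embed sc y - fps_X * fps_const z2) = 1"
    and S: "(1 - A * B) * S = 1"
  shows "resolvent sc u (z1 + z2) = fps_embed sc (x + y - 1) * ((1 + B) * S * (1 + A))"
proof (rule resolvent_unique[OF u0])
  let ?p = "x + y - 1"
  have "fps_embed sc u * fps_const (z1 + z2) * fps_embed sc ?p = fps_embed sc (u * ?p) * fps_const (z1 + z2)"
    by (simp add: fps_embed_mult mult.assoc fps_embed_commute[of ?p])
  then have "(1 - fps_embed sc u * fps_const (z1 + z2)) * fps_embed sc ?p =
      fps_embed sc ?p - fps_X * fps_const (z1 + z2)"
    by (simp add: up left_diff_distrib)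
  also have "\<dots> = (fps_embed sc x - fps_X * fps_const z1) + (fps_embed sc y - fps_X * fps_const z2) - 1"
    by (simp add: fps_embed_add fps_embed_diff algebra_simps flip: fps_const_add)
  finally show "(1 - fps_embed sc u * fps_const (z1 + z2)) * (fps_embed sc ?p * ((1 + B) * S * (1 + A))) = 1"
    using inverse_of_sum_of_inverses[OF \<alpha> \<beta> S] by (simp flip: mult.assoc)
qed

end

section \<open>Alternating words in infinitesimally free subalgebras\<close>

locale inf_free_pair =
  fixes sc :: "complex \<Rightarrow> 'a::ring_1" and \<phi> \<phi>' :: "'a \<Rightarrow> complex" and b1 b2 :: 'a
  assumes inf_ncps: "inf_ncps sc \<phi> \<phi>'"
    and inf_free: "inf_free sc \<phi> \<phi>' UNIV (\<lambda>i. if i then alg_gen sc b1 else alg_gen sc b2)"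
begin

sublocale complex_algebra sc
  using inf_ncps by unfold_locales (simp add: inf_ncps_def)

lemma C_linear_phi: "C_linear sc \<phi>"
  and C_linear_phi': "C_linear sc \<phi>'"
  and phi_1: "\<phi> 1 = 1"
  and phi'_1: "\<phi>' 1 = 0"
  using inf_ncps by (simp_all add: inf_ncps_def)

sublocale phi: additive \<phi>
  by (rule additive_if_C_linear[OF C_linear_phi])

sublocale phi': additive \<phi>'
  by (rule additive_if_C_linear[OF C_linear_phi'])

declare phi.zero [simp] phi'.zero [simp]

definition gen :: "bool \<Rightarrow> 'a" where
  "gen i = (if i then b1 else b2)"

lemma gen_simps [simp]: "gen True = b1" "gen False = b2"
  by (simp_all add: gen_def)

lemma distr_phi_0 [simp]: "distr \<phi> b 0 = 1"
  by (simp add: distr_def phi_1)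

lemma fps_apply_phi_1 [simp]: "fps_apply \<phi> 1 = 1"
  and fps_apply_phi'_1 [simp]: "fps_apply \<phi>' 1 = 0"
  by (simp_all add: fps_apply_1 C_linear_phi C_linear_phi' phi_1 phi'_1)

definition centered :: "bool \<Rightarrow> 'a set" where
  "centered i = {c \<in> alg_gen sc (gen i). \<phi> c = 0}"

definition alternating :: "bool \<Rightarrow> 'a list \<Rightarrow> bool" where
  "alternating i cs \<longleftrightarrow> cs \<noteq> [] \<and> (\<forall>l<length cs. cs ! l \<in> centered (if even l then i else \<not> i))"

lemma alternating_word_moments:
  assumes "alternating i cs"
  shows "\<phi> (prod_list cs) = 0 \<and> \<phi>' (prod_list cs) =
    (if odd (length cs)
     then (\<Prod>l<length cs div 2. \<phi> (cs ! l * cs ! (length cs - 1 - l))) * \<phi>' (cs ! (length cs div 2))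
     else 0)"
proof -
  define n where "n = length cs"
  define \<iota> where "\<iota> = (\<lambda>l::nat. if even l then i else \<not> i)"
  have n: "n \<ge> 1"
    using assms by (simp add: alternating_def n_def Suc_le_eq)
  have "\<forall>l<n. cs ! l \<in> centered (\<iota> l)"
    using assms by (simp add: alternating_def n_def \<iota>_def)
  then have letters: "\<forall>l<n. \<iota> l \<in> UNIV \<and> cs ! l \<in> (if \<iota> l then alg_gen sc b1 else alg_gen sc b2) \<and> \<phi> (cs ! l) = 0"
    by (simp add: centered_def gen_def if_distrib[of "alg_gen sc"])
  have alternates: "\<forall>l. Suc l < n \<longrightarrow> \<iota> l \<noteq> \<iota> (Suc l)"
    by (simp add: \<iota>_def)
  have "\<phi> (prod_list (map ((!) cs) [0..<n])) = 0 \<and> \<phi>' (prod_list (map ((!) cs) [0..<n])) =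
      (if odd n \<and> (\<forall>l<n. \<iota> l = \<iota> (n - 1 - l))
       then (\<Prod>l<n div 2. \<phi> (cs ! l * cs ! (n - 1 - l))) * \<phi>' (cs ! (n div 2)) else 0)"
    using inf_free[unfolded inf_free_def, rule_format, OF n conjI[OF letters alternates]] .
  moreover have "(odd n \<and> (\<forall>l<n. \<iota> l = \<iota> (n - 1 - l))) = odd n"
    by (auto simp: \<iota>_def even_diff_nat)
  moreover have "map ((!) cs) [0..<n] = cs"
    by (simp add: n_def map_nth)
  ultimately show ?thesis
    by (simp only: n_def)
qed

lemma alternating_wrap:
  assumes "alternating i cs" "odd (length cs)" "c \<in> centered (\<not> i)" "c' \<in> centered (\<not> i)"
  shows "alternating (\<not> i) (c # cs @ [c'])"
  unfolding alternating_def
proof (intro conjI allI impI)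
  fix l
  assume "l < length (c # cs @ [c'])"
  then consider "l = 0" | l' where "l = Suc l'" "l' < length cs" | "l = Suc (length cs)"
    by (cases l) fastforce+
  then show "(c # cs @ [c']) ! l \<in> centered (if even l then \<not> i else \<not> \<not> i)"
    by cases (use assms in \<open>auto simp: alternating_def nth_append\<close>)
qed simp

lemma alternating_snoc:
  assumes "alternating i cs" "odd (length cs)" "c \<in> centered (\<not> i)"
  shows "alternating i (cs @ [c])"
  unfolding alternating_def
proof (intro conjI allI impI)
  fix l
  assume "l < length (cs @ [c])"
  then consider "l < length cs" | "l = length cs"
    by fastforce
  then show "(cs @ [c]) ! l \<in> centered (if even l then i else \<not> i)"
    by cases (use assms in \<open>simp_all add: alternating_def nth_append\<close>)
qed simp

lemma phi'_alternating_wrap: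
  assumes cs: "alternating i cs" "odd (length cs)" and c: "c \<in> centered (\<not> i)" "c' \<in> centered (\<not> i)"
  shows "\<phi>' (c * prod_list cs * c') = \<phi> (c * c') * \<phi>' (prod_list cs)"
proof -
  define m where "m = length cs"
  define L where "L = c # cs @ [c']"
  have L_nth: "L ! Suc l = cs ! l" if "l < m" for l
    using that by (simp add: L_def m_def nth_append)
  have "m div 2 < m"
    using cs(2) by (intro div_less_dividend) (auto simp: m_def odd_pos)
  have "(\<Prod>l<Suc (m div 2). \<phi> (L ! l * L ! (Suc m - l))) =
      \<phi> (c * c') * (\<Prod>l<m div 2. \<phi> (L ! Suc l * L ! (m - l)))"
    by (subst prod.lessThan_Suc_shift) (simp add: L_def m_def nth_append)
  also have "(\<Prod>l<m div 2. \<phi> (L ! Suc l * L ! (m - l))) = (\<Prod>l<m div 2. \<phi> (cs ! l * cs ! (m - 1 - l)))"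
  proof (rule prod.cong[OF refl])
    fix l
    assume "l \<in> {..<m div 2}"
    then have "m - l = Suc (m - 1 - l)" "l < m" "m - 1 - l < m"
      using \<open>m div 2 < m\<close> by auto
    then show "\<phi> (L ! Suc l * L ! (m - l)) = \<phi> (cs ! l * cs ! (m - 1 - l))"
      by (simp only: L_nth)
  qed
  finally have "\<phi>' (prod_list L) = \<phi> (c * c') *
      ((\<Prod>l<m div 2. \<phi> (cs ! l * cs ! (m - 1 - l))) * \<phi>' (cs ! (m div 2)))"
    using alternating_word_moments[OF alternating_wrap[OF cs c, folded L_def]] cs(2)
      L_nth[OF \<open>m div 2 < m\<close>] by (simp add: L_def m_def)
  also have "\<dots> = \<phi> (c * c') * \<phi>' (prod_list cs)"
    using alternating_word_moments[OF cs(1)] cs(2) by (simp add: m_def)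
  finally show ?thesis
    by (simp add: L_def mult.assoc)
qed

inductive_set word_sums :: "bool \<Rightarrow> bool \<Rightarrow> 'a set" for i par :: bool
where
  zero: "0 \<in> word_sums i par"
| add_word: "alternating i cs \<Longrightarrow> odd (length cs) = par \<Longrightarrow> x \<in> word_sums i par \<Longrightarrow>
    prod_list cs + x \<in> word_sums i par"

lemma word_sums_add: "x \<in> word_sums i par \<Longrightarrow> y \<in> word_sums i par \<Longrightarrow> x + y \<in> word_sums i par"
  by (induction x rule: word_sums.induct) (auto simp: add.assoc intro: word_sums.intros)

lemma word_sums_sum: "(\<And>k. k \<in> K \<Longrightarrow> f k \<in> word_sums i par) \<Longrightarrow> sum f K \<in> word_sums i par"
  by (induction K rule: infinite_finite_induct) (auto intro: word_sums_add word_sums.zero)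

lemma centered_in_word_sums: "c \<in> centered i \<Longrightarrow> c \<in> word_sums i True"
  using word_sums.add_word[of i "[c]" True 0] by (simp add: alternating_def word_sums.zero)

lemma phi_word_sums: "x \<in> word_sums i par \<Longrightarrow> \<phi> x = 0"
  by (induction x rule: word_sums.induct) (simp_all add: phi.add alternating_word_moments)

lemma phi'_word_sums_even: "x \<in> word_sums i False \<Longrightarrow> \<phi>' x = 0"
  by (induction x rule: word_sums.induct) (simp_all add: phi'.add alternating_word_moments)

lemma word_sums_wrap:
  assumes "x \<in> word_sums i True" and c: "c \<in> centered (\<not> i)" "c' \<in> centered (\<not> i)"
  shows "c * x * c' \<in> word_sums (\<not> i) True \<and> \<phi>' (c * x * c') = \<phi> (c * c') * \<phi>' x"
  using assms(1)
proof (induction x rule: word_sums.induct)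
  case zero
  then show ?case
    by (simp add: word_sums.zero)
next
  case (add_word cs x)
  have "c * (prod_list cs + x) * c' = prod_list (c # cs @ [c']) + c * x * c'"
    by (simp add: ring_distribs mult.assoc)
  moreover have "prod_list (c # cs @ [c']) + c * x * c' \<in> word_sums (\<not> i) True"
    using add_word alternating_wrap[OF add_word(1) _ c] by (intro word_sums.intros) auto
  moreover have "\<phi>' (c * (prod_list cs + x) * c') = \<phi> (c * c') * \<phi>' (prod_list cs + x)"
    using add_word phi'_alternating_wrap[OF add_word(1) _ c] by (simp add: ring_distribs phi'.add)
  ultimately show ?case
    by simp
qed

lemma word_sums_snoc:
  assumes "x \<in> word_sums i True" and c: "c \<in> centered (\<not> i)"
  shows "x * c \<in> word_sums i False"
  using assms(1)
proof (induction x rule: word_sums.induct)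
  case zero
  then show ?case
    by (simp add: word_sums.zero)
next
  case (add_word cs x)
  have "prod_list (cs @ [c]) + x * c \<in> word_sums i False"
    using add_word alternating_snoc[OF add_word(1) _ c] by (intro word_sums.intros) auto
  then show ?case
    by (simp add: ring_distribs)
qed

definition centered_fps :: "bool \<Rightarrow> 'a fps \<Rightarrow> bool" where
  "centered_fps i F \<longleftrightarrow> (\<forall>n. F $ n \<in> centered i)"

definition word_sums_fps :: "bool \<Rightarrow> bool \<Rightarrow> 'a fps \<Rightarrow> bool" where
  "word_sums_fps i par F \<longleftrightarrow> (\<forall>n. F $ n \<in> word_sums i par)"

lemma fps_apply_phi_word_sums: "word_sums_fps i par F \<Longrightarrow> fps_apply \<phi> F = 0"
  by (auto simp: word_sums_fps_def fps_eq_iff intro: phi_word_sums)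

lemma fps_apply_phi'_word_sums_even: "word_sums_fps i False F \<Longrightarrow> fps_apply \<phi>' F = 0"
  by (auto simp: word_sums_fps_def fps_eq_iff intro: phi'_word_sums_even)

lemma fps_apply_phi_centered: "centered_fps i F \<Longrightarrow> fps_apply \<phi> F = 0"
  by (simp add: centered_fps_def centered_def fps_eq_iff)

lemma word_sums_fps_snoc:
  "word_sums_fps i True F \<Longrightarrow> centered_fps (\<not> i) H \<Longrightarrow> word_sums_fps i False (F * H)"
  unfolding word_sums_fps_def centered_fps_def fps_mult_nth
  by (auto intro!: word_sums_sum word_sums_snoc)

lemma word_sums_fps_wrap:
  assumes F: "centered_fps (\<not> i) F" and G: "word_sums_fps i True G"
  shows "word_sums_fps (\<not> i) True (F * G * F)"
    and "fps_apply \<phi>' (F * G * F) = fps_apply \<phi> (F * F) * fps_apply \<phi>' G"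
proof -
  have wrap: "F $ j * G $ k * F $ l \<in> word_sums (\<not> i) True \<and>
      \<phi>' (F $ j * G $ k * F $ l) = \<phi> (F $ j * F $ l) * \<phi>' (G $ k)" for j k l
    using word_sums_wrap[of "G $ k" i "F $ j" "F $ l"] F G by (simp add: centered_fps_def word_sums_fps_def)
  show "word_sums_fps (\<not> i) True (F * G * F)"
    unfolding word_sums_fps_def fps_mult3_nth using wrap by (auto intro!: word_sums_sum)
  show "fps_apply \<phi>' (F * G * F) = fps_apply \<phi> (F * F) * fps_apply \<phi>' G"
  proof (rule fps_ext)
    fix n
    have "fps_apply \<phi>' (F * G * F) $ n = (\<Sum>m=0..n. \<Sum>j=0..m. \<phi> (F $ j * F $ (n - m)) * \<phi>' (G $ (m - j)))"
      by (simp add: fps_mult3_nth phi'.sum wrap)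
    also have "\<dots> = (\<Sum>m=0..n. \<Sum>j=0..m. \<phi> (F $ j * F $ (m - j)) * \<phi>' (G $ (n - m)))"
      using triangle_sum_swap[of "\<lambda>j k l. \<phi> (F $ j * F $ l) * \<phi>' (G $ k)" n] by simp
    also have "\<dots> = (fps_apply \<phi> (F * F) * fps_apply \<phi>' G) $ n"
      by (simp add: fps_mult_nth phi.sum sum_distrib_right)
    finally show "fps_apply \<phi>' (F * G * F) $ n = (fps_apply \<phi> (F * F) * fps_apply \<phi>' G) $ n" .
  qed
qed

section \<open>Inverses of products of centred series\<close>

lemma word_sums_wrap_nth:
  assumes F: "centered_fps (\<not> i) F" "F $ 0 = 0" and G: "\<forall>k<n. G $ k \<in> word_sums i True"
  shows "(F * G * F) $ n \<in> word_sums (\<not> i) True"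
  unfolding fps_mult3_nth
proof (intro word_sums_sum)
  fix m j
  assume "m \<in> {0..n}" "j \<in> {0..m}"
  show "F $ j * G $ (m - j) * F $ (n - m) \<in> word_sums (\<not> i) True"
  proof (cases "j = 0")
    case True
    then show ?thesis
      using F(2) by (simp add: word_sums.zero)
  next
    case False
    then have "G $ (m - j) \<in> word_sums i True"
      using G \<open>m \<in> {0..n}\<close> \<open>j \<in> {0..m}\<close> by auto
    then show ?thesis
      using word_sums_wrap F(1) by (simp add: centered_fps_def)
  qed
qed

context
  fixes A B S :: "'a fps"
  assumes A: "centered_fps True A" "A $ 0 = 0"
    and B: "centered_fps False B" "B $ 0 = 0"
    and S: "(1 - A * B) * S = 1" "S * (1 - A * B) = 1"
begin

lemma inverse_unfold: "S = 1 + A * B * S" "S = 1 + S * A * B"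
  using S by (simp_all add: left_diff_distrib right_diff_distrib diff_eq_eq mult.assoc)

lemma inverse_expansions: "S * A = A + A * (B * S) * A" "B * S = B + B * (S * A) * B"
proof -
  have "S * A = (1 + A * B * S) * A"
    using inverse_unfold(1) by (rule arg_cong[where f="\<lambda>T. T * A"])
  then show "S * A = A + A * (B * S) * A"
    by (simp add: distrib_right mult.assoc)
  have "B * S = B * (1 + S * A * B)"
    using inverse_unfold(2) by (rule arg_cong[where f="\<lambda>T. B * T"])
  then show "B * S = B + B * (S * A) * B"
    by (simp add: distrib_left mult.assoc)
qed

lemma word_sums_fps_inverse: "word_sums_fps True True (S * A)" "word_sums_fps False True (B * S)"
proof -
  have "(S * A) $ n \<in> word_sums True True \<and> (B * S) $ n \<in> word_sums False True" for n
  proof (induction n rule: less_induct)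
    case (less n)
    have "(S * A) $ n = A $ n + (A * (B * S) * A) $ n"
      by (subst inverse_expansions(1)) simp
    moreover have "(A * (B * S) * A) $ n \<in> word_sums True True"
      using word_sums_wrap_nth[of False A n "B * S"] A less by simp
    moreover have "(B * S) $ n = B $ n + (B * (S * A) * B) $ n"
      by (subst inverse_expansions(2)) simp
    moreover have "(B * (S * A) * B) $ n \<in> word_sums False True"
      using word_sums_wrap_nth[of True B n "S * A"] B less by simp
    ultimately show ?case
      using A(1) B(1) by (simp add: centered_fps_def word_sums_add centered_in_word_sums)
  qed
  then show "word_sums_fps True True (S * A)" "word_sums_fps False True (B * S)"
    by (simp_all add: word_sums_fps_def)
qed

lemma free_inverse_moments:
  defines "K \<equiv> (1 + B) * S * (1 + A)"
  shows "fps_apply \<phi> K = 1"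
    and "(1 - fps_apply \<phi> (A * A) * fps_apply \<phi> (B * B)) * fps_apply \<phi>' K =
       fps_apply \<phi>' A + fps_apply \<phi> (A * A) * fps_apply \<phi>' B +
       fps_apply \<phi>' B + fps_apply \<phi> (B * B) * fps_apply \<phi>' A"
proof -
  note words = word_sums_fps_inverse
  have even_words: "word_sums_fps True False (S * A * B)" "word_sums_fps False False (B * S * A)"
    using word_sums_fps_snoc[of True "S * A" B] word_sums_fps_snoc[of False "B * S" A] words A(1) B(1)
    by simp_all
  have "K = S + S * A + B * S + B * S * A"
    unfolding K_def by (simp add: distrib_left distrib_right mult.assoc add.assoc)
  also have "\<dots> = 1 + S * A * B + S * A + B * S + B * S * A"
    using inverse_unfold(2) by (rule arg_cong[where f="\<lambda>T. T + S * A + B * S + B * S * A"])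
  finally have K: "K = 1 + S * A * B + S * A + B * S + B * S * A" .
  show "fps_apply \<phi> K = 1"
    using words even_words
    by (simp add: K fps_apply_add[OF C_linear_phi] fps_apply_phi_word_sums)
  have "fps_apply \<phi>' K = fps_apply \<phi>' (S * A) + fps_apply \<phi>' (B * S)"
    using even_words by (simp add: K fps_apply_add[OF C_linear_phi'] fps_apply_phi'_word_sums_even)
  moreover have "fps_apply \<phi>' (S * A) = fps_apply \<phi>' A + fps_apply \<phi> (A * A) * fps_apply \<phi>' (B * S)"
    using word_sums_fps_wrap(2)[of False A "B * S"] A words
    by (subst inverse_expansions) (simp add: fps_apply_add[OF C_linear_phi'])
  moreover have "fps_apply \<phi>' (B * S) = fps_apply \<phi>' B + fps_apply \<phi> (B * B) * fps_apply \<phi>' (S * A)"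
    using word_sums_fps_wrap(2)[of True B "S * A"] B words
    by (subst inverse_expansions) (simp add: fps_apply_add[OF C_linear_phi'])
  ultimately show "(1 - fps_apply \<phi> (A * A) * fps_apply \<phi> (B * B)) * fps_apply \<phi>' K =
       fps_apply \<phi>' A + fps_apply \<phi> (A * A) * fps_apply \<phi>' B +
       fps_apply \<phi>' B + fps_apply \<phi> (B * B) * fps_apply \<phi>' A"
    by algebra
qed

end

section \<open>Subordination and the inverse Markov--Krein transform\<close>

context
  fixes i :: bool and u x :: "complex fps"
  assumes u0: "u $ 0 = 0" and moments_u: "Abs_fps (distr \<phi> (gen i)) oo u = x"
begin

lemma subordinated_nth_0: "x $ 0 = 1"
  using moments_u[symmetric] by simp

lemma resolvent_part_centered:
  defines "A \<equiv> fps_embed sc (inverse x) * resolvent sc u (gen i) - 1"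
  shows "A $ 0 = 0" and "centered_fps i A"
proof -
  show "A $ 0 = 0"
    using subordinated_nth_0 by (simp add: A_def fps_compose_elem_def fps_geometric_def)
  have "fps_apply \<phi> A = 0"
    using subordinated_nth_0
    by (simp add: A_def fps_apply_diff[OF C_linear_phi] fps_apply_embed_mult[OF C_linear_phi]
        fps_apply_resolvent[OF C_linear_phi] moments_u inverse_mult_eq_1)
  moreover have "A $ n \<in> alg_gen sc (gen i)" for n
  proof -
    have "(fps_embed sc (inverse x) * resolvent sc u (gen i)) $ n \<in> alg_gen sc (gen i)"
      unfolding fps_mult_nth fps_embed_nth
      by (intro alg_gen_sum alg_gen_scale fps_compose_elem_alg_gen)
    moreover have "(1 :: 'a fps) $ n \<in> alg_gen sc (gen i)"
      using alg_gen_monomial[of "(1 :: complex fps) $ n" "gen i" 0] by (cases "n = 0") simp_all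
    ultimately show ?thesis
      unfolding A_def fps_sub_nth by (rule alg_gen_diff)
  qed
  ultimately show "centered_fps i A"
    by (simp add: centered_fps_def centered_def fps_eq_iff)
qed

lemma resolvent_part_moments:
  assumes ux: "u * x = fps_X"
  defines "A \<equiv> fps_embed sc (inverse x) * resolvent sc u (gen i) - 1"
  shows "x * fps_apply \<phi>' A = Abs_fps (distr \<phi>' (gen i)) oo u"
    and "(1 + fps_apply \<phi> (A * A)) * (x - fps_X * fps_deriv x) = 1"
proof -
  let ?Q = "resolvent sc u (gen i)"
  have xi: "inverse x * x = 1"
    using subordinated_nth_0 by (simp add: inverse_mult_eq_1)
  show "x * fps_apply \<phi>' A = Abs_fps (distr \<phi>' (gen i)) oo u"
    using xi by (simp add: A_def fps_apply_diff[OF C_linear_phi'] fps_apply_embed_mult[OF C_linear_phi']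
        fps_apply_resolvent[OF C_linear_phi'] mult.assoc[symmetric] mult.commute[of x])
  have "(1 + A) * (1 + A) = fps_embed sc (inverse x) * (?Q * fps_embed sc (inverse x)) * ?Q"
    by (simp only: A_def diff_add_cancel add.commute[of 1] mult.assoc)
  also have "\<dots> = fps_embed sc (inverse x * inverse x) * (?Q * ?Q)"
    by (simp only: fps_embed_commute[of "inverse x" ?Q, symmetric] fps_embed_mult mult.assoc)
  finally have "fps_apply \<phi> ((1 + A) * (1 + A)) =
      inverse x * inverse x * (fps_deriv (fps_X * Abs_fps (distr \<phi> (gen i))) oo u)"
    by (simp only: fps_apply_embed_mult[OF C_linear_phi] fps_apply_resolvent_square[OF u0 C_linear_phi])
  moreover have "fps_apply \<phi> A = 0"
    using resolvent_part_centered(2) unfolding A_def by (rule fps_apply_phi_centered)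
  then have "fps_apply \<phi> ((1 + A) * (1 + A)) = 1 + fps_apply \<phi> (A * A)"
    by (simp add: ring_distribs fps_apply_add[OF C_linear_phi])
  ultimately show "(1 + fps_apply \<phi> (A * A)) * (x - fps_X * fps_deriv x) = 1"
    using fps_deriv_compose_subordination[OF u0 ux moments_u] xi
    by (simp add: mult.assoc) (simp add: mult.commute mult.left_commute)
qed

end

lemma subordinated_centered_inverse:
  assumes MK: "is_inv_MK (distr \<phi> (gen i)) \<tau>"
    and phi'_gen: "distr \<phi>' (gen i) = (\<lambda>n. distr \<phi> (gen i) n - \<tau> n)"
  obtains x A where "x $ 0 = 1" "A $ 0 = 0" "centered_fps i A"
    "(fps_embed sc x - fps_X * fps_const (gen i)) * (1 + A) = 1"
    "(1 + A) * (fps_embed sc x - fps_X * fps_const (gen i)) = 1"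
    "fps_apply \<phi>' A = - fps_apply \<phi> (A * A)"
    "(1 + fps_apply \<phi> (A * A)) * (x - fps_X * fps_deriv x) = 1"
proof -
  define N where "N = Abs_fps (distr \<phi> (gen i))"
  define u where "u = fps_inv (fps_X * N)"
  define x where "x = N oo u" \<comment> \<open>\<open>x = 1 + X R(X)\<close> for the R-transform \<open>R\<close> of \<open>gen i\<close>\<close>
  define A where "A = fps_embed sc (inverse x) * resolvent sc u (gen i) - 1"
  have "N $ 0 = 1"
    by (simp add: N_def)
  then have u0: "u $ 0 = 0" and ux: "u * x = fps_X" and Nu: "N oo u = x"
    using fps_inv_X_mult_subordination[of N] by (simp_all add: u_def x_def)
  note x0 = subordinated_nth_0[OF u0 Nu[unfolded N_def]]
  note A = resolvent_part_centered[OF u0 Nu[unfolded N_def], folded A_def]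
    resolvent_part_moments[OF u0 Nu[unfolded N_def] ux, folded A_def N_def]
  have inverse_pair: "(fps_embed sc x - fps_X * fps_const (gen i)) * (1 + A) = 1"
    "(1 + A) * (fps_embed sc x - fps_X * fps_const (gen i)) = 1"
    using subordinated_resolvent_inverse[OF u0 ux x0, of "gen i"] by (simp_all add: A_def)
  have "N \<noteq> 0"
    using \<open>N $ 0 = 1\<close> by auto
  moreover have "Abs_fps (distr \<phi>' (gen i)) = N - Abs_fps \<tau>"
    using phi'_gen by (simp add: N_def fps_eq_iff)
  ultimately have inverse: "(x - fps_X * fps_deriv x) * (1 - fps_apply \<phi>' A) = 1"
    using inv_MK_iff_subordination[OF MK[unfolded is_inv_MK_iff_fps, folded N_def] _ u0 ux Nu A(3)[symmetric]]
    by simp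
  have "1 + fps_apply \<phi> (A * A) =
      (1 + fps_apply \<phi> (A * A)) * ((x - fps_X * fps_deriv x) * (1 - fps_apply \<phi>' A))"
    by (simp add: inverse)
  also have "\<dots> = 1 - fps_apply \<phi>' A"
    by (simp only: A(4) mult.assoc[symmetric] mult_1_left)
  finally have "fps_apply \<phi>' A = - fps_apply \<phi> (A * A)"
    by algebra
  then show ?thesis
    using that x0 A inverse_pair by blast
qed

lemma subordination_add:
  assumes MK1: "is_inv_MK (distr \<phi> b1) \<tau>1" "distr \<phi>' b1 = (\<lambda>n. distr \<phi> b1 n - \<tau>1 n)"
    and MK2: "is_inv_MK (distr \<phi> b2) \<tau>2" "distr \<phi>' b2 = (\<lambda>n. distr \<phi> b2 n - \<tau>2 n)"
  obtains p u s where "u $ 0 = 0" "u * p = fps_X" "Abs_fps (distr \<phi> (b1 + b2)) oo u = p"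
    "Abs_fps (distr \<phi>' (b1 + b2)) oo u = p * s" "(p - fps_X * fps_deriv p) * (1 - s) = 1"
proof -
  obtain x A where x0: "x $ 0 = 1" and A: "A $ 0 = 0" "centered_fps True A"
    and \<alpha>: "(fps_embed sc x - fps_X * fps_const b1) * (1 + A) = 1"
      "(1 + A) * (fps_embed sc x - fps_X * fps_const b1) = 1"
    and A': "fps_apply \<phi>' A = - fps_apply \<phi> (A * A)"
    and h1: "(1 + fps_apply \<phi> (A * A)) * (x - fps_X * fps_deriv x) = 1"
    using subordinated_centered_inverse[of True \<tau>1] MK1 by auto
  obtain y B where y0: "y $ 0 = 1" and B: "B $ 0 = 0" "centered_fps False B"
    and \<beta>: "(fps_embed sc y - fps_X * fps_const b2) * (1 + B) = 1"
      "(1 + B) * (fps_embed sc y - fps_X * fps_const b2) = 1"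
    and B': "fps_apply \<phi>' B = - fps_apply \<phi> (B * B)"
    and h2: "(1 + fps_apply \<phi> (B * B)) * (y - fps_X * fps_deriv y) = 1"
    using subordinated_centered_inverse[of False \<tau>2] MK2 by auto
  define p where "p = x + y - 1" \<comment> \<open>R-transforms add under free convolution\<close>
  define u where "u = fps_X * inverse p"
  define S where "S = fps_right_inverse (1 - A * B) 1"
  define K where "K = (1 + B) * S * (1 + A)"
  have S: "(1 - A * B) * S = 1" "S * (1 - A * B) = 1"
    using A(1) fps_right_inverse[of "1 - A * B" 1] fps_left_inverse'[of 1 "1 - A * B" 1]
    by (simp_all add: S_def)
  have u0: "u $ 0 = 0" and up: "u * p = fps_X"
    using x0 y0 by (simp_all add: u_def p_def mult.assoc inverse_mult_eq_1)
  note res = resolvent_add[OF u0 up[unfolded p_def] \<alpha> \<beta> S(1), folded p_def K_def]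
    free_inverse_moments[OF A(2,1) B(2,1) S, folded K_def]
  have "Abs_fps (distr \<phi> (b1 + b2)) oo u = p"
    using res by (simp flip: fps_apply_resolvent[OF C_linear_phi])
      (simp add: fps_apply_embed_mult[OF C_linear_phi])
  moreover have "Abs_fps (distr \<phi>' (b1 + b2)) oo u = p * fps_apply \<phi>' K"
    using res by (simp flip: fps_apply_resolvent[OF C_linear_phi'])
      (simp add: fps_apply_embed_mult[OF C_linear_phi'])
  moreover have "(p - fps_X * fps_deriv p) * (1 - fps_apply \<phi>' K) = 1"
  proof -
    have "(1 - fps_apply \<phi> (A * A) * fps_apply \<phi> (B * B)) * (1 - fps_apply \<phi>' K) =
        (1 + fps_apply \<phi> (A * A)) * (1 + fps_apply \<phi> (B * B))"
      using res(3) unfolding A' B' by algebra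
    moreover have "1 - fps_apply \<phi> (A * A) * fps_apply \<phi> (B * B) \<noteq> 0"
      using A(1) B(1) by (auto simp: fps_eq_iff[of _ 0] intro!: exI[of _ 0])
    moreover have "p - fps_X * fps_deriv p = (x - fps_X * fps_deriv x) + (y - fps_X * fps_deriv y) - 1"
      by (simp add: p_def algebra_simps)
    ultimately show ?thesis
      using add_inverses_minus_one_inverse[OF _ _ h1 h2] by simp
  qed
  ultimately show ?thesis
    using that u0 up by blast
qed

lemma distr_phi'_add:
  assumes "is_inv_MK (distr \<phi> b1) \<tau>1" "distr \<phi>' b1 = (\<lambda>n. distr \<phi> b1 n - \<tau>1 n)"
    and "is_inv_MK (distr \<phi> b2) \<tau>2" "distr \<phi>' b2 = (\<lambda>n. distr \<phi> b2 n - \<tau>2 n)"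
    and MK: "is_inv_MK (distr \<phi> (b1 + b2)) \<tau>"
  shows "distr \<phi>' (b1 + b2) = (\<lambda>n. distr \<phi> (b1 + b2) n - \<tau> n)"
proof -
  define N where "N = Abs_fps (distr \<phi> (b1 + b2))"
  obtain p u s where u0: "u $ 0 = 0" and up: "u * p = fps_X" and Nu: "N oo u = p"
    and Du: "Abs_fps (distr \<phi>' (b1 + b2)) oo u = p * s" and inverse: "(p - fps_X * fps_deriv p) * (1 - s) = 1"
    using subordination_add[OF assms(1-4)] unfolding N_def by blast
  have "N \<noteq> 0"
    by (auto simp: N_def fps_eq_iff[of _ 0] intro!: exI[of _ 0])
  then have "Abs_fps (distr \<phi>' (b1 + b2)) = N - Abs_fps \<tau>"
    using inv_MK_iff_subordination[OF MK[unfolded is_inv_MK_iff_fps, folded N_def] _ u0 up Nu Du] inverse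
    by simp
  then show ?thesis
    by (simp add: N_def fps_eq_iff fun_eq_iff)
qed

end

theorem proposition5p5:
  fixes sc :: "complex \<Rightarrow> 'a::ring_1" and \<phi> \<phi>' :: "'a \<Rightarrow> complex" and b1 b2 :: 'a
    and \<mu>1 \<mu>2 \<tau>1 \<tau>2 \<mu> \<tau> :: "nat \<Rightarrow> complex"
  assumes "\<mu>1 0 = 1" and "\<mu>2 0 = 1"
    and "is_inv_MK \<mu>1 \<tau>1" and "is_inv_MK \<mu>2 \<tau>2"
    and "inf_ncps sc \<phi> \<phi>'"
    and "inf_free sc \<phi> \<phi>' UNIV (\<lambda>i::bool. if i then alg_gen sc b1 else alg_gen sc b2)"
    and "distr \<phi> b1 = \<mu>1" and "distr \<phi>' b1 = (\<lambda>n. \<mu>1 n - \<tau>1 n)"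
    and "distr \<phi> b2 = \<mu>2" and "distr \<phi>' b2 = (\<lambda>n. \<mu>2 n - \<tau>2 n)"
    and "\<mu> = distr \<phi> (b1 + b2)"
    and "is_inv_MK \<mu> \<tau>"
  shows "distr \<phi> (b1 + b2) = \<mu> \<and> distr \<phi>' (b1 + b2) = (\<lambda>n. \<mu> n - \<tau> n)"
proof -
  interpret inf_free_pair sc \<phi> \<phi>' b1 b2
    using assms(5,6) by unfold_locales
  have "distr \<phi>' (b1 + b2) = (\<lambda>n. distr \<phi> (b1 + b2) n - \<tau> n)"
    by (rule distr_phi'_add) (simp_all add: assms(3,4,7-10,12) flip: assms(11))
  then show ?thesis
    by (simp add: assms(11))
qed

end
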